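(* Let $k\le n$ be positive integers and $A\in\mathbb{C}^{n\times n}$ with eigenvalues ordered so that $|\lambda_1(A)|\ge\cdots\ge|\lambda_n(A)|$. Then $$\left|\prod_{i=1}^k\lambda_i(A)\right|\le\left(\frac nk\right)^{k/2}\min\left\{\max_{|\alpha|=k}\prod_{i\in\alpha}\|\mathrm{col}_i(A)\|_2,\ \max_{|\alpha|=k}\prod_{i\in\alpha}\|\mathrm{row}_i(A)\|_2\right\},$$ where the maxima are over subsets $\alpha\subseteq\{1,\ldots,n\}$ with $|\alpha|=k$.
   Context: $\mathrm{col}_i(A)$ is the $i$th column and $\mathrm{row}_i(A)$ the (transposed) $i$th row of $A$; $\|\cdot\|_2$ is the Euclidean norm. *)

theory Defs
  imports "Jordan_Normal_Form.Char_Poly"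
begin

definition vec_norm2 :: "complex vec \<Rightarrow> real" where
  "vec_norm2 v = sqrt (\<Sum>j<dim_vec v. (cmod (v $ j))\<^sup>2)"

text \<open>es is the list of all eigenvalues of A, repeated according to algebraic
  multiplicity, i.e. the roots of the characteristic polynomial.\<close>
definition is_eigenvalue_list :: "complex mat \<Rightarrow> complex list \<Rightarrow> bool" where
  "is_eigenvalue_list A es \<longleftrightarrow>
     length es = dim_row A \<and> char_poly A = (\<Prod>e\<leftarrow>es. [:- e, 1:])"

end

theory Submission
  imports Defs "Jordan_Normal_Form.Schur_Decomposition" "HOL-Analysis.Convex"
begin

text \<open>
  Schur triangularization \<open>A = P B P\<^sup>-\<^sup>1\<close> makes the span of the first \<open>k\<close> columns \<open>X\<close> of \<open>P\<close>
  invariant: \<open>A X = X T\<close>, where \<open>T\<close> is the leading \<open>k \<times> k\<close> block of \<open>B\<close>, so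
  \<open>det T = \<lambda>\<^sub>1 \<cdots> \<lambda>\<^sub>k\<close>. With \<open>G = X\<^sup>* X\<close> and \<open>D = A X = X T\<close> one has
  \<open>det (D\<^sup>* D) = \<bar>det T\<bar>\<^sup>2 det G\<close>. By Cauchy--Binet, \<open>det (D\<^sup>* D)\<close> is the sum of the
  squared \<open>k \<times> k\<close> row minors of \<open>D\<close>; a nonzero minor uses \<open>k\<close> distinct rows of \<open>A\<close>, whose
  norms have product at most \<open>M\<close>, so weighting row \<open>j\<close> by \<open>u\<^sub>j = \<parallel>row\<^sub>j A\<parallel>\<^sup>-\<^sup>2\<close> gives
  \<open>det (D\<^sup>* D) \<le> M\<^sup>2 det (D\<^sup>* U D)\<close>. Finally \<open>det (D\<^sup>* U D) = det G \<cdot> det K\<close> for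
  \<open>K = G\<^sup>-\<^sup>1 D\<^sup>* U D\<close>: its eigenvalues are nonnegative reals (Rayleigh quotients of
  \<open>D\<^sup>* U D\<close> relative to \<open>G\<close>), and its trace is \<open>\<Sum>\<^sub>j u\<^sub>j \<parallel>\<Pi> row\<^sub>j A\<parallel>\<^sup>2 \<le> n\<close> for the
  orthogonal projection \<open>\<Pi>\<close> onto the column space of \<open>X\<close>, so AM--GM gives
  \<open>det K \<le> (n/k)\<^sup>k\<close>. The column bound is the row bound for \<open>A\<^sup>T\<close>.
\<close>

definition weighted_adjoint :: "complex mat \<Rightarrow> (nat \<Rightarrow> real) \<Rightarrow> complex mat" where
  "weighted_adjoint M u = mat (dim_col M) (dim_row M) (\<lambda>(i, j). cnj (M $$ (j, i)) * of_real (u j))"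

abbreviation adjoint_mat :: "complex mat \<Rightarrow> complex mat" where
  "adjoint_mat M \<equiv> weighted_adjoint M (\<lambda>_. 1)"

lemma weighted_adjoint_dim [simp]:
  "dim_row (weighted_adjoint M u) = dim_col M" "dim_col (weighted_adjoint M u) = dim_row M"
  unfolding weighted_adjoint_def by auto

lemma weighted_adjoint_carrier [simp]:
  "M \<in> carrier_mat n k \<Longrightarrow> weighted_adjoint M u \<in> carrier_mat k n"
  by (rule carrier_matI) auto

lemma weighted_gram_carrier [simp]:
  "M \<in> carrier_mat n k \<Longrightarrow> weighted_adjoint M u * M \<in> carrier_mat k k"
  by (rule carrier_matI) auto

lemma cnj_mult_self: "cnj z * z = of_real ((cmod z)\<^sup>2)"
  using complex_norm_square[of z] by (simp add: mult.commute del: of_real_power)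

lemma adjoint_mat_mult:
  assumes "M \<in> carrier_mat m n" and "N \<in> carrier_mat n k"
  shows "adjoint_mat (M * N) = adjoint_mat N * adjoint_mat M"
  by (rule eq_matI)
    (use assms in \<open>auto simp: weighted_adjoint_def scalar_prod_def cnj_sum mult.commute intro!: sum.cong\<close>)

lemma det_adjoint_mat:
  assumes M: "M \<in> carrier_mat k k"
  shows "det (adjoint_mat M) = cnj (det M)"
proof -
  have "adjoint_mat M = transpose_mat (map_mat cnj M)"
    by (rule eq_matI) (use M in \<open>auto simp: weighted_adjoint_def\<close>)
  then have "det (adjoint_mat M) = det (map_mat cnj M)"
    using det_transpose[of "map_mat cnj M" k] M by simp
  also have "\<dots> = cnj (det M)"
    unfolding det_def'[OF M] using M
    by (subst det_def'[of _ k]) (auto simp: cnj_sum cnj_prod intro!: sum.cong prod.cong)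
  finally show ?thesis .
qed

lemma quadratic_form_weighted_gram:
  assumes M: "M \<in> carrier_mat n k" and v: "v \<in> carrier_vec k"
  shows "(\<Sum>i<k. cnj (v $ i) * ((weighted_adjoint M u * M) *\<^sub>v v) $ i) =
    of_real (\<Sum>j<n. u j * (cmod ((M *\<^sub>v v) $ j))\<^sup>2)"
proof -
  have "(\<Sum>i<k. cnj (v $ i) * ((weighted_adjoint M u * M) *\<^sub>v v) $ i) =
      (\<Sum>i<k. cnj (v $ i) * (\<Sum>l<k. (\<Sum>j<n. cnj (M $$ (j, i)) * of_real (u j) * M $$ (j, l)) * v $ l))"
    using M v by (auto simp: weighted_adjoint_def scalar_prod_def atLeast0LessThan intro!: sum.cong)
  also have "\<dots> = (\<Sum>j<n. of_real (u j) * (\<Sum>i<k. cnj (M $$ (j, i)) * cnj (v $ i)) *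
      (\<Sum>l<k. M $$ (j, l) * v $ l))"
    by (simp add: sum_distrib_left sum_distrib_right ac_simps, subst sum.swap,
        rule sum.cong[OF refl], subst sum.swap, simp)
  also have "\<dots> = (\<Sum>j<n. of_real (u j) * (cnj ((M *\<^sub>v v) $ j) * (M *\<^sub>v v) $ j))"
    using M v by (auto simp: scalar_prod_def atLeast0LessThan cnj_sum intro!: sum.cong)
  also have "\<dots> = of_real (\<Sum>j<n. u j * (cmod ((M *\<^sub>v v) $ j))\<^sup>2)"
    by (simp add: cnj_mult_self)
  finally show ?thesis .
qed

lemma vec_norm2_nonneg: "0 \<le> vec_norm2 v"
  unfolding vec_norm2_def by (simp add: sum_nonneg)

lemma vec_norm2_sq: "(vec_norm2 v)\<^sup>2 = (\<Sum>j<dim_vec v. (cmod (v $ j))\<^sup>2)"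
  unfolding vec_norm2_def by (simp add: sum_nonneg)

lemma sum_cmod_sq_eq_0_imp_zero:
  assumes "a \<in> carrier_vec n" and "(\<Sum>j<n. (cmod (a $ j))\<^sup>2) = 0"
  shows "a = 0\<^sub>v n"
proof -
  have "\<forall>j\<in>{..<n}. (cmod (a $ j))\<^sup>2 = 0"
    using assms(2) by (subst sum_nonneg_eq_0_iff[symmetric]) auto
  then show ?thesis using assms(1) by (intro eq_vecI) auto
qed

lemma sum_cmod_sq_mult_vec_pos:
  assumes X: "X \<in> carrier_mat n k"
    and inj: "\<And>v. v \<in> carrier_vec k \<Longrightarrow> X *\<^sub>v v = 0\<^sub>v n \<Longrightarrow> v = 0\<^sub>v k"
    and v: "v \<in> carrier_vec k" "v \<noteq> 0\<^sub>v k"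
  shows "0 < (\<Sum>j<n. (cmod ((X *\<^sub>v v) $ j))\<^sup>2)"
proof -
  have "(\<Sum>j<n. (cmod ((X *\<^sub>v v) $ j))\<^sup>2) \<noteq> 0"
    using inj v sum_cmod_sq_eq_0_imp_zero[OF mult_mat_vec_carrier[OF X v(1)]] by blast
  moreover have "0 \<le> (\<Sum>j<n. (cmod ((X *\<^sub>v v) $ j))\<^sup>2)" by (intro sum_nonneg) auto
  ultimately show ?thesis by linarith
qed

section \<open>Cauchy--Binet for weighted Gram determinants\<close>

definition select_rows :: "'a mat \<Rightarrow> nat \<Rightarrow> (nat \<Rightarrow> nat) \<Rightarrow> 'a mat" where
  "select_rows Y k f = mat k k (\<lambda>(i, j). Y $$ (f i, j))"

definition index_maps :: "nat \<Rightarrow> nat \<Rightarrow> (nat \<Rightarrow> nat) set" where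
  "index_maps k n = {f. (\<forall>i\<in>{0..<k}. f i \<in> {0..<n}) \<and> (\<forall>i. i \<notin> {0..<k} \<longrightarrow> f i = i)}"

lemma select_rows_carrier [simp]: "select_rows Y k f \<in> carrier_mat k k"
  and select_rows_dim [simp]: "dim_row (select_rows Y k f) = k" "dim_col (select_rows Y k f) = k"
  unfolding select_rows_def by auto

lemma index_maps_comp_permutes:
  "f \<in> index_maps k n \<Longrightarrow> p permutes {0..<k} \<Longrightarrow> f \<circ> p \<in> index_maps k n"
  unfolding index_maps_def by (auto simp: permutes_in_image permutes_not_in)

lemma sum_index_maps_comp_permutes:
  assumes p: "p permutes {0..<k}"
  shows "(\<Sum>f\<in>index_maps k n. a (f \<circ> p)) = (\<Sum>f\<in>index_maps k n. a f)"
  by (rule sum.reindex_bij_witness[where i="\<lambda>f. f \<circ> Hilbert_Choice.inv p" and j="\<lambda>f. f \<circ> p"])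
    (auto simp: index_maps_comp_permutes[OF _ p] index_maps_comp_permutes[OF _ permutes_inv[OF p]]
      comp_assoc permutes_inv_o[OF p])

lemma det_select_rows_comp_permutes:
  assumes p: "p permutes {0..<k}"
  shows "det (select_rows Y k (f \<circ> p)) = signof p * det (select_rows Y k f)"
proof -
  have "select_rows Y k (f \<circ> p) = mat k k (\<lambda>(i, j). select_rows Y k f $$ (p i, j))"
    by (rule eq_matI) (use p in \<open>auto simp: select_rows_def permutes_in_image\<close>)
  then show ?thesis using det_permute_rows[OF select_rows_carrier p] by simp
qed

lemma det_select_rows_not_inj:
  assumes "\<not> inj_on f {0..<k}"
  shows "det (select_rows Y k f) = 0"
proof -
  from assms obtain i j where ij: "f i = f j" "i \<noteq> j" "i < k" "j < k"
    unfolding inj_on_def by auto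
  show ?thesis
    by (rule det_identical_rows[OF select_rows_carrier ij(2-4)]) (use ij in \<open>auto simp: select_rows_def\<close>)
qed

lemma cnj_det_select_rows:
  "(\<Sum>p | p permutes {0..<k}. signof p * (\<Prod>i = 0..<k. cnj (Y $$ (f (p i), i)))) =
    cnj (det (select_rows Y k f))"
proof -
  have "det (select_rows Y k f) =
      (\<Sum>p | p permutes {0..<k}. signof p * (\<Prod>i = 0..<k. select_rows Y k f $$ (p i, i)))"
    using mat_det_left_def[OF select_rows_carrier[of Y k f]] by simp
  also have "\<dots> = (\<Sum>p | p permutes {0..<k}. signof p * (\<Prod>i = 0..<k. Y $$ (f (p i), i)))"
    by (intro sum.cong refl arg_cong2[where f="(*)"] prod.cong)
      (auto simp: select_rows_def permutes_in_image)
  finally show ?thesis by (simp add: cnj_sum cnj_prod)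
qed

lemma det_mult_eq_sum_select_rows:
  assumes X: "X \<in> carrier_mat k n" and Y: "Y \<in> carrier_mat n k"
  shows "det (X * Y) = (\<Sum>f\<in>index_maps k n. (\<Prod>i\<in>{0..<k}. X $$ (i, f i)) * det (select_rows Y k f))"
proof -
  have "det (X * Y) = (\<Sum>f\<in>index_maps k n. det (mat\<^sub>r k k (\<lambda>i. X $$ (i, f i) \<cdot>\<^sub>v row Y (f i))))"
    unfolding mat_mul_finsum_alt[OF X Y] index_maps_def
    by (rule det_linear_rows_sum) (use X Y in auto)
  also have "\<dots> = (\<Sum>f\<in>index_maps k n. (\<Prod>i\<in>{0..<k}. X $$ (i, f i)) * det (select_rows Y k f))"
  proof (rule sum.cong[OF refl])
    fix f assume f: "f \<in> index_maps k n"
    have "mat\<^sub>r k k (\<lambda>i. row Y (f i)) = select_rows Y k f"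
      by (rule eq_matI) (use f Y in \<open>auto simp: select_rows_def index_maps_def\<close>)
    moreover have "det (mat\<^sub>r k k (\<lambda>i. X $$ (i, f i) \<cdot>\<^sub>v row Y (f i))) =
        (\<Prod>i\<in>{0..<k}. X $$ (i, f i)) * det (mat\<^sub>r k k (\<lambda>i. row Y (f i)))"
      by (rule det_rows_mul) (use Y in auto)
    ultimately show "det (mat\<^sub>r k k (\<lambda>i. X $$ (i, f i) \<cdot>\<^sub>v row Y (f i))) =
        (\<Prod>i\<in>{0..<k}. X $$ (i, f i)) * det (select_rows Y k f)"
      by simp
  qed
  finally show ?thesis .
qed

definition weighted_minor_sum :: "complex mat \<Rightarrow> nat \<Rightarrow> nat \<Rightarrow> (nat \<Rightarrow> real) \<Rightarrow> real" where
  "weighted_minor_sum Y n k u =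
    (\<Sum>f\<in>index_maps k n. (\<Prod>i\<in>{0..<k}. u (f i)) * (cmod (det (select_rows Y k f)))\<^sup>2)"

lemma weighted_minor_sum_nonneg: "(\<And>j. 0 \<le> u j) \<Longrightarrow> 0 \<le> weighted_minor_sum Y n k u"
  unfolding weighted_minor_sum_def by (intro sum_nonneg mult_nonneg_nonneg prod_nonneg) auto

text \<open>Summing over all maps \<open>{0..<k} \<rightarrow> {0..<n}\<close> counts each \<open>k\<close>-subset of rows \<open>k!\<close> times.\<close>
lemma fact_mult_det_weighted_gram:
  assumes Y: "Y \<in> carrier_mat n k"
  shows "of_nat (fact k) * det (weighted_adjoint Y u * Y) = of_real (weighted_minor_sum Y n k u)"
proof -
  let ?P = "{p. p permutes {0..<k}}"
  define a where "a f = (\<Prod>i\<in>{0..<k}. cnj (Y $$ (f i, i)) * of_real (u (f i))) * det (select_rows Y k f)"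
    for f
  have det_eq: "det (weighted_adjoint Y u * Y) = (\<Sum>f\<in>index_maps k n. a (f \<circ> p))"
    if p: "p permutes {0..<k}" for p
  proof -
    have "det (weighted_adjoint Y u * Y) = (\<Sum>f\<in>index_maps k n. a f)"
      unfolding det_mult_eq_sum_select_rows[OF weighted_adjoint_carrier[OF Y] Y] a_def
      by (intro sum.cong refl arg_cong2[where f="(*)"] prod.cong)
        (use Y in \<open>auto simp: weighted_adjoint_def index_maps_def\<close>)
    then show ?thesis unfolding sum_index_maps_comp_permutes[OF p] .
  qed
  have sum_permutations: "(\<Sum>p\<in>?P. a (f \<circ> p)) =
      of_real ((\<Prod>i\<in>{0..<k}. u (f i)) * (cmod (det (select_rows Y k f)))\<^sup>2)" for f
  proof -
    have "a (f \<circ> p) = (of_real (\<Prod>i\<in>{0..<k}. u (f i)) * det (select_rows Y k f)) *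
        (signof p * (\<Prod>i = 0..<k. cnj (Y $$ (f (p i), i))))" if p: "p \<in> ?P" for p
    proof -
      have "(\<Prod>i\<in>{0..<k}. complex_of_real (u (f (p i)))) = (\<Prod>i\<in>{0..<k}. of_real (u (f i)))"
        using prod.permute[of p "{0..<k}" "\<lambda>i. complex_of_real (u (f i))"] p by (simp add: o_def)
      then show ?thesis
        unfolding a_def det_select_rows_comp_permutes[OF p[simplified]] prod.distrib
        by (simp add: ac_simps)
    qed
    then have "(\<Sum>p\<in>?P. a (f \<circ> p)) = of_real (\<Prod>i\<in>{0..<k}. u (f i)) * det (select_rows Y k f) *
        (\<Sum>p\<in>?P. signof p * (\<Prod>i = 0..<k. cnj (Y $$ (f (p i), i))))"
      by (simp add: sum_distrib_left)
    also have "\<dots> = of_real (\<Prod>i\<in>{0..<k}. u (f i)) * (cnj (det (select_rows Y k f)) * det (select_rows Y k f))"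
      unfolding cnj_det_select_rows by (simp add: ac_simps)
    finally show ?thesis by (simp add: cnj_mult_self del: of_real_prod)
  qed
  have "of_nat (fact k) * det (weighted_adjoint Y u * Y) = (\<Sum>p\<in>?P. det (weighted_adjoint Y u * Y))"
    by (simp add: card_permutations)
  also have "\<dots> = (\<Sum>p\<in>?P. \<Sum>f\<in>index_maps k n. a (f \<circ> p))"
    using det_eq by (intro sum.cong) auto
  also have "\<dots> = (\<Sum>f\<in>index_maps k n. \<Sum>p\<in>?P. a (f \<circ> p))"
    by (rule sum.swap)
  also have "\<dots> = of_real (weighted_minor_sum Y n k u)"
    unfolding weighted_minor_sum_def of_real_sum sum_permutations ..
  finally show ?thesis .
qed

lemma det_weighted_gram:
  assumes "Y \<in> carrier_mat n k"
  shows "det (weighted_adjoint Y u * Y) = of_real (weighted_minor_sum Y n k u / fact k)"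
  using fact_mult_det_weighted_gram[OF assms, of u] by (simp add: field_simps)

section \<open>Determinant, trace and AM--GM\<close>

definition mat_trace :: "'a::comm_ring_1 mat \<Rightarrow> 'a" where
  "mat_trace M = (\<Sum>i<dim_row M. M $$ (i, i))"

lemma mat_trace_mult_comm:
  assumes M: "M \<in> carrier_mat m n" and N: "N \<in> carrier_mat n m"
  shows "mat_trace (M * N) = mat_trace (N * M)"
proof -
  have "mat_trace (M * N) = (\<Sum>i<m. \<Sum>j<n. M $$ (i, j) * N $$ (j, i))"
    using M N by (auto simp: mat_trace_def scalar_prod_def atLeast0LessThan intro!: sum.cong)
  also have "\<dots> = (\<Sum>j<n. \<Sum>i<m. N $$ (j, i) * M $$ (i, j))"
    by (subst sum.swap) (simp add: mult.commute)
  also have "\<dots> = mat_trace (N * M)"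
    using M N by (auto simp: mat_trace_def scalar_prod_def atLeast0LessThan intro!: sum.cong)
  finally show ?thesis .
qed

lemma mat_trace_similar:
  assumes "similar_mat_wit K B P Q" and "K \<in> carrier_mat k k"
  shows "mat_trace K = mat_trace B"
proof -
  from similar_mat_witD2[OF assms(2,1)]
  have B: "B \<in> carrier_mat k k" and P: "P \<in> carrier_mat k k" and Q: "Q \<in> carrier_mat k k"
    and "Q * P = 1\<^sub>m k" and "K = P * B * Q"
    by auto
  then have "mat_trace K = mat_trace (P * (B * Q))" by simp
  also have "\<dots> = mat_trace (B * Q * P)" by (rule mat_trace_mult_comm) (use P B Q in auto)
  also have "\<dots> = mat_trace B" using B Q P \<open>Q * P = 1\<^sub>m k\<close> by simp
  finally show ?thesis .
qed

lemma det_trace_eq_eigenvalues: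
  fixes K :: "'a::conjugatable_ordered_field mat"
  assumes K: "K \<in> carrier_mat k k" and cp: "char_poly K = (\<Prod>e\<leftarrow>es. [:- e, 1:])"
  shows "det K = (\<Prod>i<k. es ! i)" and "mat_trace K = (\<Sum>i<k. es ! i)"
proof -
  obtain B P Q where "schur_decomposition K es = (B, P, Q)"
    by (cases "schur_decomposition K es") auto
  with schur_decomposition[OF K cp] have sim: "similar_mat_wit K B P Q"
    and ut: "upper_triangular B" and diag: "diag_mat B = es"
    by auto
  have B: "B \<in> carrier_mat k k" using similar_mat_witD2[OF K sim] by auto
  have es: "es ! i = B $$ (i, i)" if "i < k" for i
    using that B diag[symmetric] by (simp add: diag_mat_def)
  have "det K = det B" by (rule det_similar) (use sim in \<open>auto simp: similar_mat_def\<close>)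
  then show "det K = (\<Prod>i<k. es ! i)"
    using det_upper_triangular[OF ut B] B es by (simp add: prod_list_diag_prod atLeast0LessThan)
  have "mat_trace K = mat_trace B" by (rule mat_trace_similar[OF sim K])
  then show "mat_trace K = (\<Sum>i<k. es ! i)"
    using B es by (simp add: mat_trace_def)
qed

lemma prod_le_mean_power:
  fixes x :: "'a \<Rightarrow> real"
  assumes S: "finite S" "S \<noteq> {}" and x: "\<And>i. i \<in> S \<Longrightarrow> 0 \<le> x i"
  shows "(\<Prod>i\<in>S. x i) \<le> ((\<Sum>i\<in>S. x i) / card S) ^ card S"
proof -
  have "0 < card S" using S by (simp add: card_gt_0_iff)
  moreover have "0 \<le> (\<Prod>i\<in>S. x i)" using x by (simp add: prod_nonneg)
  ultimately have "(\<Prod>i\<in>S. x i) = ((\<Prod>i\<in>S. x i) powr (1 / card S)) ^ card S"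
    by (cases "(\<Prod>i\<in>S. x i) = 0") (simp_all add: powr_realpow[symmetric] powr_powr)
  also have "\<dots> \<le> ((\<Sum>i\<in>S. x i) / card S) ^ card S"
    using arith_geom_mean[OF S x] by (intro power_mono) (simp_all add: sum_divide_distrib)
  finally show ?thesis .
qed

lemma det_le_trace_power:
  assumes K: "K \<in> carrier_mat k k" and k: "0 < k"
    and eigenvalues: "\<And>e. eigenvalue K e \<Longrightarrow> Im e = 0 \<and> 0 \<le> Re e"
    and trace: "Re (mat_trace K) \<le> c"
  shows "Re (det K) \<le> (c / k) ^ k"
proof -
  obtain es where cp: "char_poly K = (\<Prod>e\<leftarrow>es. [:- e, 1:])" and len: "length es = k"
    using char_poly_factorized[OF K] by blast
  have es: "Im (es ! i) = 0 \<and> 0 \<le> Re (es ! i)" if "i < k" for i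
  proof -
    have "poly (char_poly K) (es ! i) = 0"
      unfolding cp poly_prod_list using that len by (auto simp: prod_list_zero_iff)
    then show ?thesis using eigenvalue_root_char_poly[OF K] eigenvalues by blast
  qed
  define x where "x i = Re (es ! i)" for i
  have es_x: "es ! i = of_real (x i)" if "i < k" for i
    using es[OF that] by (simp add: x_def complex_eq_iff)
  have "Re (det K) = (\<Prod>i<k. x i)"
    unfolding det_trace_eq_eigenvalues(1)[OF K cp] using es_x by (simp flip: of_real_prod)
  also have "\<dots> \<le> ((\<Sum>i<k. x i) / k) ^ k"
    using prod_le_mean_power[of "{..<k}" x] k es by (auto simp: x_def)
  also have "\<dots> \<le> (c / k) ^ k"
  proof -
    have "(\<Sum>i<k. x i) = Re (mat_trace K)"
      unfolding det_trace_eq_eigenvalues(2)[OF K cp] using es_x by (simp add: x_def)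
    moreover have "0 \<le> (\<Sum>i<k. x i)" using es by (auto simp: x_def intro: sum_nonneg)
    ultimately show ?thesis using trace by (intro power_mono divide_right_mono) auto
  qed
  finally show ?thesis .
qed

text \<open>With \<open>G = X\<^sup>* X\<close> and \<open>\<Pi> = X G\<^sup>-\<^sup>1 X\<^sup>*\<close> the orthogonal projection onto the column
  space of \<open>X\<close>, the left-hand side is \<open>\<parallel>\<Pi> y'\<parallel>\<^sup>2\<close> for the conjugate \<open>y'\<close> of \<open>y\<close>, and
  \<open>\<parallel>y' - \<Pi> y'\<parallel>\<^sup>2 = \<parallel>y\<parallel>\<^sup>2 - \<parallel>\<Pi> y'\<parallel>\<^sup>2\<close>.\<close>
lemma gram_projection_le:
  assumes X: "X \<in> carrier_mat n k" and Ginv: "Ginv \<in> carrier_mat k k"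
    and inverse: "adjoint_mat X * X * Ginv = 1\<^sub>m k"
  shows "Re (\<Sum>i<k. (\<Sum>p<n. y p * X $$ (p, i)) *
      (\<Sum>l<k. Ginv $$ (i, l) * cnj (\<Sum>p<n. y p * X $$ (p, l)))) \<le> (\<Sum>p<n. (cmod (y p))\<^sup>2)"
proof -
  define d where "d l = (\<Sum>p<n. y p * X $$ (p, l))" for l
  define c where "c = vec k (\<lambda>l. cnj (d l))"
  define z where "z = Ginv *\<^sub>v c"
  define a where "a = X *\<^sub>v z"
  define q where "q = (\<Sum>i<k. d i * z $ i)"
  define N where "N = (\<Sum>j<n. (cmod (a $ j))\<^sup>2)"
  define W where "W = (\<Sum>p<n. (cmod (y p))\<^sup>2)"
  have c: "c \<in> carrier_vec k" and z: "z \<in> carrier_vec k"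
    using Ginv by (auto simp: c_def z_def)
  have lhs: "(\<Sum>i<k. d i * (\<Sum>l<k. Ginv $$ (i, l) * cnj (d l))) = q"
    using Ginv by (auto simp: q_def z_def c_def scalar_prod_def atLeast0LessThan intro!: sum.cong)
  have "(adjoint_mat X * X) *\<^sub>v z = c"
    using assoc_mult_mat_vec[of "adjoint_mat X * X" k k Ginv k c] X Ginv c inverse by (simp add: z_def)
  then have "cnj q = (\<Sum>i<k. cnj (z $ i) * ((adjoint_mat X * X) *\<^sub>v z) $ i)"
    by (auto simp: q_def c_def cnj_sum mult.commute intro!: sum.cong)
  also have "\<dots> = of_real N"
    using quadratic_form_weighted_gram[OF X z, of "\<lambda>_. 1"] by (simp add: N_def a_def)
  finally have qN: "q = of_real N"
    by (metis complex_cnj_cnj complex_cnj_complex_of_real)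
  have "q = (\<Sum>i<k. \<Sum>p<n. y p * X $$ (p, i) * z $ i)"
    by (simp add: q_def d_def sum_distrib_right)
  also have "\<dots> = (\<Sum>p<n. y p * a $ p)"
    using X z by (subst sum.swap) (auto simp: a_def scalar_prod_def atLeast0LessThan sum_distrib_left
      ac_simps intro!: sum.cong)
  finally have qa: "q = (\<Sum>p<n. y p * a $ p)" .
  have "of_real (\<Sum>p<n. (cmod (cnj (y p) - a $ p))\<^sup>2) =
      (\<Sum>p<n. cnj (y p) * y p - y p * a $ p - cnj (y p * a $ p) + cnj (a $ p) * a $ p)"
    unfolding of_real_sum cnj_mult_self[symmetric] by (intro sum.cong) (auto simp: algebra_simps)
  also have "\<dots> = of_real W - q - cnj q + of_real N"
    unfolding W_def N_def qa of_real_sum cnj_mult_self cnj_sum sum.distrib sum_subtractf ..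
  also have "\<dots> = of_real (W - N)"
    unfolding qN by simp
  finally have "W - N = (\<Sum>p<n. (cmod (cnj (y p) - a $ p))\<^sup>2)"
    by (metis of_real_eq_iff)
  then have "N \<le> W" by (smt (verit) sum_nonneg zero_le_power2)
  then show ?thesis using lhs qN by (simp add: d_def W_def)
qed

lemma trace_weighted_gram_le:
  assumes A: "A \<in> carrier_mat n n" and X: "X \<in> carrier_mat n k" and Ginv: "Ginv \<in> carrier_mat k k"
    and inverse: "adjoint_mat X * X * Ginv = 1\<^sub>m k"
    and u: "\<And>j. 0 \<le> u j" and u_row: "\<And>j. j < n \<Longrightarrow> u j * (vec_norm2 (row A j))\<^sup>2 \<le> 1"
  shows "Re (mat_trace (Ginv * (weighted_adjoint (A * X) u * (A * X)))) \<le> real n"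
proof -
  define D where "D = A * X"
  have D: "D \<in> carrier_mat n k" using A X by (simp add: D_def)
  have D_entry: "D $$ (j, i) = (\<Sum>p<n. A $$ (j, p) * X $$ (p, i))" if "j < n" "i < k" for j i
    using that A X by (auto simp: D_def scalar_prod_def atLeast0LessThan intro!: sum.cong)
  define q where "q j = (\<Sum>i<k. D $$ (j, i) * (\<Sum>l<k. Ginv $$ (i, l) * cnj (D $$ (j, l))))" for j
  have "mat_trace (Ginv * (weighted_adjoint D u * D)) =
      (\<Sum>i<k. \<Sum>l<k. Ginv $$ (i, l) * (\<Sum>j<n. cnj (D $$ (j, l)) * of_real (u j) * D $$ (j, i)))"
    using Ginv D by (auto simp: mat_trace_def weighted_adjoint_def scalar_prod_def atLeast0LessThan
      intro!: sum.cong)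
  also have "\<dots> = (\<Sum>i<k. \<Sum>j<n. \<Sum>l<k. of_real (u j) * (D $$ (j, i) * (Ginv $$ (i, l) * cnj (D $$ (j, l)))))"
    by (simp add: sum_distrib_left ac_simps) (rule sum.cong[OF refl], rule sum.swap)
  also have "\<dots> = (\<Sum>j<n. of_real (u j) * q j)"
    by (subst sum.swap) (simp add: q_def sum_distrib_left)
  finally have trace: "mat_trace (Ginv * (weighted_adjoint D u * D)) = (\<Sum>j<n. of_real (u j) * q j)" .
  have "Re (of_real (u j) * q j) \<le> 1" if j: "j < n" for j
  proof -
    have "Re (q j) \<le> (\<Sum>p<n. (cmod (A $$ (j, p)))\<^sup>2)"
      using gram_projection_le[OF X Ginv inverse, of "\<lambda>p. A $$ (j, p)"] j
      by (simp add: q_def D_entry)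
    also have "\<dots> = (vec_norm2 (row A j))\<^sup>2"
      using A j by (simp add: vec_norm2_sq)
    finally have "u j * Re (q j) \<le> u j * (vec_norm2 (row A j))\<^sup>2"
      using u by (rule mult_left_mono)
    then show ?thesis using u_row[OF j] by simp
  qed
  then have "Re (\<Sum>j<n. of_real (u j) * q j) \<le> (\<Sum>j<n. 1)"
    unfolding Re_sum by (intro sum_mono) auto
  then show ?thesis using trace by (simp add: D_def)
qed

lemma det_gram_pos:
  assumes X: "X \<in> carrier_mat n k"
    and inj: "\<And>v. v \<in> carrier_vec k \<Longrightarrow> X *\<^sub>v v = 0\<^sub>v n \<Longrightarrow> v = 0\<^sub>v k"
  obtains g where "0 < g" and "det (adjoint_mat X * X) = of_real g"
proof
  let ?g = "weighted_minor_sum X n k (\<lambda>_. 1) / fact k"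
  show det: "det (adjoint_mat X * X) = of_real ?g"
    by (rule det_weighted_gram[OF X])
  have "det (adjoint_mat X * X) \<noteq> 0"
  proof
    assume "det (adjoint_mat X * X) = 0"
    then obtain v where v: "v \<in> carrier_vec k" "v \<noteq> 0\<^sub>v k" and "(adjoint_mat X * X) *\<^sub>v v = 0\<^sub>v k"
      using det_0_iff_vec_prod_zero[of "adjoint_mat X * X" k] X by auto
    then have "(\<Sum>i<k. cnj (v $ i) * ((adjoint_mat X * X) *\<^sub>v v) $ i) = 0"
      by simp
    then have "(\<Sum>j<n. (cmod ((X *\<^sub>v v) $ j))\<^sup>2) = 0"
      unfolding quadratic_form_weighted_gram[OF X v(1)] of_real_eq_0_iff by simp
    then show False using sum_cmod_sq_mult_vec_pos[OF X inj v] by simp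
  qed
  then show "0 < ?g"
    using det weighted_minor_sum_nonneg[of "\<lambda>_. 1" X n k] by simp
qed

lemma eigenvalue_gram_inverse_mult_nonneg:
  assumes X: "X \<in> carrier_mat n k" and D: "D \<in> carrier_mat m k"
    and inj: "\<And>v. v \<in> carrier_vec k \<Longrightarrow> X *\<^sub>v v = 0\<^sub>v n \<Longrightarrow> v = 0\<^sub>v k"
    and u: "\<And>j. 0 \<le> u j"
    and Ginv: "Ginv \<in> carrier_mat k k" and inverse: "adjoint_mat X * X * Ginv = 1\<^sub>m k"
    and "eigenvalue (Ginv * (weighted_adjoint D u * D)) e"
  shows "Im e = 0 \<and> 0 \<le> Re e"
proof -
  define G where "G = adjoint_mat X * X"
  define W where "W = weighted_adjoint D u * D"
  have G: "G \<in> carrier_mat k k" and W: "W \<in> carrier_mat k k"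
    using X D by (auto simp: G_def W_def)
  obtain v where v: "v \<in> carrier_vec k" "v \<noteq> 0\<^sub>v k" and eigen: "(Ginv * W) *\<^sub>v v = e \<cdot>\<^sub>v v"
    using assms(7) Ginv W unfolding eigenvalue_def eigenvector_def W_def by auto
  have "G * (Ginv * W) = W"
    using assoc_mult_mat[OF G Ginv W] inverse W by (simp add: G_def)
  then have "W *\<^sub>v v = G *\<^sub>v ((Ginv * W) *\<^sub>v v)"
    using assoc_mult_mat_vec[OF G _ v(1), of "Ginv * W"] Ginv W by simp
  also have "\<dots> = e \<cdot>\<^sub>v (G *\<^sub>v v)"
    unfolding eigen by (rule mult_mat_vec[OF G v(1)])
  finally have Wv: "W *\<^sub>v v = e \<cdot>\<^sub>v (G *\<^sub>v v)" .
  define a where "a = (\<Sum>j<m. u j * (cmod ((D *\<^sub>v v) $ j))\<^sup>2)"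
  define b where "b = (\<Sum>j<n. (cmod ((X *\<^sub>v v) $ j))\<^sup>2)"
  have "0 \<le> a" using u by (auto simp: a_def intro: sum_nonneg)
  have "0 < b" unfolding b_def by (rule sum_cmod_sq_mult_vec_pos[OF X inj v])
  have "of_real a = (\<Sum>i<k. cnj (v $ i) * (W *\<^sub>v v) $ i)"
    using quadratic_form_weighted_gram[OF D v(1)] by (simp add: a_def W_def)
  also have "\<dots> = e * (\<Sum>i<k. cnj (v $ i) * (G *\<^sub>v v) $ i)"
    using Wv G v by (auto simp: sum_distrib_left intro!: sum.cong)
  also have "\<dots> = e * of_real b"
    using quadratic_form_weighted_gram[OF X v(1), of "\<lambda>_. 1"] by (simp add: b_def G_def)
  finally have "e = of_real (a / b)"
    using \<open>0 < b\<close> by (simp add: field_simps)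
  then show ?thesis using \<open>0 \<le> a\<close> \<open>0 < b\<close> by simp
qed

lemma det_weighted_gram_le:
  assumes A: "A \<in> carrier_mat n n" and X: "X \<in> carrier_mat n k" and k: "0 < k"
    and inj: "\<And>v. v \<in> carrier_vec k \<Longrightarrow> X *\<^sub>v v = 0\<^sub>v n \<Longrightarrow> v = 0\<^sub>v k"
    and u: "\<And>j. 0 \<le> u j" and u_row: "\<And>j. j < n \<Longrightarrow> u j * (vec_norm2 (row A j))\<^sup>2 \<le> 1"
  shows "Re (det (weighted_adjoint (A * X) u * (A * X))) \<le>
    Re (det (adjoint_mat X * X)) * (real n / real k) ^ k"
proof -
  define G where "G = adjoint_mat X * X"
  define W where "W = weighted_adjoint (A * X) u * (A * X)"
  have G: "G \<in> carrier_mat k k" and W: "W \<in> carrier_mat k k"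
    using A X by (auto simp: G_def W_def)
  obtain g where "0 < g" and g: "det G = of_real g"
    using det_gram_pos[OF X inj] unfolding G_def by blast
  define Ginv where "Ginv = (1 / det G) \<cdot>\<^sub>m adj_mat G"
  have Ginv: "Ginv \<in> carrier_mat k k"
    using adj_mat(1)[OF G] by (simp add: Ginv_def)
  have inverse: "G * Ginv = 1\<^sub>m k"
    using mult_smult_distrib[OF G adj_mat(1)[OF G], of "1 / det G"] adj_mat(2)[OF G] g \<open>0 < g\<close>
    by (auto simp: Ginv_def intro!: eq_matI)
  have "G * (Ginv * W) = W"
    using assoc_mult_mat[OF G Ginv W] inverse W by simp
  then have "det W = det G * det (Ginv * W)"
    using det_mult[OF G, of "Ginv * W"] Ginv W by simp
  moreover have "Re (det (Ginv * W)) \<le> (real n / real k) ^ k"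
  proof (rule det_le_trace_power[OF _ k])
    show "Ginv * W \<in> carrier_mat k k" using Ginv W by simp
    show "Im e = 0 \<and> 0 \<le> Re e" if "eigenvalue (Ginv * W) e" for e
      using eigenvalue_gram_inverse_mult_nonneg[of X n k "A * X" n u Ginv e] that A X inj u Ginv inverse
      by (simp add: G_def W_def)
    show "Re (mat_trace (Ginv * W)) \<le> real n"
      using trace_weighted_gram_le[OF A X Ginv _ u u_row] inverse by (simp add: G_def W_def)
  qed
  ultimately show ?thesis
    using \<open>0 < g\<close> g by (simp add: G_def W_def mult_left_mono mult.commute)
qed

section \<open>Invariant subspaces from Schur triangularization\<close>

lemma upper_triangular_mult_leading_cols:
  fixes B :: "'a::comm_ring_1 mat"
  assumes B: "B \<in> carrier_mat n n" and ut: "upper_triangular B" and "k \<le> n"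
  defines "E \<equiv> mat n k (\<lambda>(i, j). of_bool (i = j))"
  shows "B * E = E * mat k k (\<lambda>(i, j). B $$ (i, j))"
proof (rule eq_matI)
  fix i j assume "i < dim_row (E * mat k k (\<lambda>(i, j). B $$ (i, j)))"
    and "j < dim_col (E * mat k k (\<lambda>(i, j). B $$ (i, j)))"
  then have i: "i < n" and j: "j < k" by (auto simp: E_def)
  have "(B * E) $$ (i, j) = B $$ (i, j)"
    using i j B \<open>k \<le> n\<close> by (auto simp: E_def scalar_prod_def)
  also have "\<dots> = (E * mat k k (\<lambda>(i, j). B $$ (i, j))) $$ (i, j)"
  proof (cases "i < k")
    case False
    then have "B $$ (i, j) = 0" using ut B i j by (auto simp: upper_triangular_def)
    then show ?thesis using False i j by (auto simp: E_def scalar_prod_def)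
  qed (use i j in \<open>auto simp: E_def scalar_prod_def\<close>)
  finally show "(B * E) $$ (i, j) = (E * mat k k (\<lambda>(i, j). B $$ (i, j))) $$ (i, j)" .
qed (use B in \<open>auto simp: E_def\<close>)

lemma left_inverse_mult_vec_eq_0:
  fixes L :: "'a::semiring_1 mat"
  assumes L: "L \<in> carrier_mat k n" and X: "X \<in> carrier_mat n k" and LX: "L * X = 1\<^sub>m k"
    and v: "v \<in> carrier_vec k" and Xv: "X *\<^sub>v v = 0\<^sub>v n"
  shows "v = 0\<^sub>v k"
proof -
  have "v = (L * X) *\<^sub>v v" using LX v by simp
  also have "\<dots> = L *\<^sub>v (X *\<^sub>v v)" using L X v by (rule assoc_mult_mat_vec)
  also have "\<dots> = 0\<^sub>v k" unfolding Xv using L by (intro eq_vecI) auto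
  finally show ?thesis .
qed

lemma schur_invariant_subspace:
  fixes A :: "'a::conjugatable_ordered_field mat"
  assumes A: "A \<in> carrier_mat n n" and cp: "char_poly A = (\<Prod>e\<leftarrow>es. [:- e, 1:])" and "k \<le> n"
  obtains X T where "X \<in> carrier_mat n k" and "T \<in> carrier_mat k k" and "A * X = X * T"
    and "det T = (\<Prod>i<k. es ! i)"
    and "\<And>v. v \<in> carrier_vec k \<Longrightarrow> X *\<^sub>v v = 0\<^sub>v n \<Longrightarrow> v = 0\<^sub>v k"
proof -
  obtain B P Q where "schur_decomposition A es = (B, P, Q)"
    by (cases "schur_decomposition A es") auto
  with schur_decomposition[OF A cp] have sim: "similar_mat_wit A B P Q"
    and ut: "upper_triangular B" and diag: "diag_mat B = es"
    by auto
  from similar_mat_witD2[OF A sim] have B: "B \<in> carrier_mat n n" and P: "P \<in> carrier_mat n n"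
    and Q: "Q \<in> carrier_mat n n" and QP: "Q * P = 1\<^sub>m n" and APBQ: "A = P * B * Q"
    by auto
  define E :: "'a mat" where "E = mat n k (\<lambda>(i, j). of_bool (i = j))"
  define T where "T = mat k k (\<lambda>(i, j). B $$ (i, j))"
  have E: "E \<in> carrier_mat n k" and T: "T \<in> carrier_mat k k"
    by (auto simp: E_def T_def)
  have QPE: "Q * (P * E) = E"
    using assoc_mult_mat[OF Q P E] QP E by simp
  have "A * (P * E) = P * B * (Q * (P * E))"
    using APBQ assoc_mult_mat[of "P * B" n n Q n "P * E" k] P B Q E by simp
  also have "\<dots> = P * (B * E)"
    using QPE assoc_mult_mat[OF P B E] by simp
  also have "\<dots> = (P * E) * T"
    using upper_triangular_mult_leading_cols[OF B ut \<open>k \<le> n\<close>] assoc_mult_mat[OF P E T]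
    by (simp add: E_def T_def)
  finally have "A * (P * E) = P * E * T" .
  moreover have "det T = (\<Prod>i<k. es ! i)"
  proof -
    have "upper_triangular T" using ut B \<open>k \<le> n\<close> by (auto simp: upper_triangular_def T_def)
    then have "det T = (\<Prod>i = 0..<k. T $$ (i, i))"
      using det_upper_triangular[OF _ T] T by (simp add: prod_list_diag_prod)
    then show ?thesis
      using B \<open>k \<le> n\<close> diag[symmetric] by (auto simp: diag_mat_def T_def atLeast0LessThan intro!: prod.cong)
  qed
  moreover have "transpose_mat E * Q * (P * E) = 1\<^sub>m k"
  proof -
    have "transpose_mat E * E = 1\<^sub>m k"
      using \<open>k \<le> n\<close> by (auto simp: E_def scalar_prod_def intro!: eq_matI)
    then show ?thesis
      using assoc_mult_mat[of "transpose_mat E" k n Q n "P * E" k] E Q P QPE by simp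
  qed
  then have "v = 0\<^sub>v k" if "v \<in> carrier_vec k" and "(P * E) *\<^sub>v v = 0\<^sub>v n" for v
    using left_inverse_mult_vec_eq_0[of "transpose_mat E * Q" k n "P * E"] that E P Q by auto
  ultimately show ?thesis using that[of "P * E" T] P E T by auto
qed

lemma det_eq_0_if_zero_row:
  assumes M: "M \<in> carrier_mat k k" and i: "i < k" and zero: "\<And>j. j < k \<Longrightarrow> M $$ (i, j) = 0"
  shows "det M = 0"
  unfolding det_def'[OF M]
proof (rule sum.neutral, intro ballI)
  fix p assume "p \<in> {p. p permutes {0..<k}}"
  then have "p i < k" using i by (auto simp: permutes_in_image)
  then have "(\<Prod>l = 0..<k. M $$ (l, p l)) = 0" using i zero by (intro prod_zero bexI[of _ i]) auto
  then show "signof p * (\<Prod>l = 0..<k. M $$ (l, p l)) = 0" by simp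
qed

text \<open>A nonzero minor uses \<open>k\<close> distinct rows, none of weight zero, so reweighting its term
  by \<open>\<Prod> 1 / w\<close> costs at most the factor \<open>c\<close>.\<close>
lemma weighted_minor_sum_le_row_weights:
  assumes w: "\<And>j. 0 \<le> w j"
    and zero_rows: "\<And>j l. j < n \<Longrightarrow> l < k \<Longrightarrow> w j = 0 \<Longrightarrow> D $$ (j, l) = 0"
    and bound: "\<And>\<alpha>. \<alpha> \<subseteq> {0..<n} \<Longrightarrow> card \<alpha> = k \<Longrightarrow> (\<Prod>j\<in>\<alpha>. w j) \<le> c"
  shows "weighted_minor_sum D n k (\<lambda>_. 1) \<le> c * weighted_minor_sum D n k (\<lambda>j. inverse (w j))"
  unfolding weighted_minor_sum_def sum_distrib_left
proof (rule sum_mono)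
  fix f assume "f \<in> index_maps k n"
  then have f: "f i < n" if "i < k" for i using that by (auto simp: index_maps_def)
  let ?d = "(cmod (det (select_rows D k f)))\<^sup>2"
  show "(\<Prod>i\<in>{0..<k}. 1) * ?d \<le> c * ((\<Prod>i\<in>{0..<k}. inverse (w (f i))) * ?d)"
  proof (cases "det (select_rows D k f) = 0")
    case False
    then have inj: "inj_on f {0..<k}" using det_select_rows_not_inj by blast
    have w_pos: "0 < w (f i)" if i: "i < k" for i
    proof (rule ccontr)
      assume "\<not> 0 < w (f i)"
      then have "w (f i) = 0" using w[of "f i"] by simp
      then have "det (select_rows D k f) = 0"
        by (intro det_eq_0_if_zero_row[OF select_rows_carrier i])
          (use zero_rows f i in \<open>auto simp: select_rows_def\<close>)
      with False show False by simp
    qed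
    have "(\<Prod>i\<in>{0..<k}. w (f i)) = (\<Prod>j\<in>f ` {0..<k}. w j)"
      using prod.reindex[OF inj, of w] by simp
    also have "\<dots> \<le> c"
      using f card_image[OF inj] by (intro bound) auto
    finally have "(\<Prod>i\<in>{0..<k}. w (f i)) * ((\<Prod>i\<in>{0..<k}. inverse (w (f i))) * ?d) \<le>
        c * ((\<Prod>i\<in>{0..<k}. inverse (w (f i))) * ?d)"
      using w by (intro mult_right_mono mult_nonneg_nonneg prod_nonneg) auto
    moreover have "(\<Prod>i\<in>{0..<k}. w (f i)) * (\<Prod>i\<in>{0..<k}. inverse (w (f i))) =
        (\<Prod>i\<in>{0..<k}. w (f i) * inverse (w (f i)))"
      by (rule prod.distrib[symmetric])
    moreover have "\<dots> = 1"
      using w_pos by (intro prod.neutral) (simp add: less_imp_neq[symmetric])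
    ultimately show ?thesis by (simp add: mult.assoc[symmetric])
  qed simp
qed

lemma det_gram_mult_right:
  assumes X: "X \<in> carrier_mat n k" and T: "T \<in> carrier_mat k k"
  shows "det (adjoint_mat (X * T) * (X * T)) = of_real ((cmod (det T))\<^sup>2) * det (adjoint_mat X * X)"
proof -
  have G: "adjoint_mat X * X \<in> carrier_mat k k" using X by simp
  have "adjoint_mat (X * T) * (X * T) = adjoint_mat T * (adjoint_mat X * X * T)"
    unfolding adjoint_mat_mult[OF X T]
    using assoc_mult_mat[of "adjoint_mat T" k k "adjoint_mat X" n "X * T" k]
      assoc_mult_mat[of "adjoint_mat X" k n X k T k] X T by simp
  then have "det (adjoint_mat (X * T) * (X * T)) = cnj (det T) * det T * det (adjoint_mat X * X)"
    using det_mult[of "adjoint_mat T" k "adjoint_mat X * X * T"] det_mult[OF G T]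
      det_adjoint_mat[OF T] mult_carrier_mat[OF G T] T by (simp add: ac_simps)
  then show ?thesis unfolding cnj_mult_self .
qed

lemma minor_sum_le_row_norms:
  assumes A: "A \<in> carrier_mat n n" and X: "X \<in> carrier_mat n k"
    and M: "\<And>\<alpha>. \<alpha> \<subseteq> {0..<n} \<Longrightarrow> card \<alpha> = k \<Longrightarrow> (\<Prod>i\<in>\<alpha>. vec_norm2 (row A i)) \<le> M"
  shows "weighted_minor_sum (A * X) n k (\<lambda>_. 1) \<le>
    M\<^sup>2 * weighted_minor_sum (A * X) n k (\<lambda>j. inverse ((vec_norm2 (row A j))\<^sup>2))"
proof (rule weighted_minor_sum_le_row_weights)
  fix j l assume "j < n" "l < k" "(vec_norm2 (row A j))\<^sup>2 = 0"
  then have "row A j = 0\<^sub>v n"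
    using A by (intro sum_cmod_sq_eq_0_imp_zero) (auto simp: vec_norm2_sq)
  then show "(A * X) $$ (j, l) = 0"
    using \<open>j < n\<close> \<open>l < k\<close> A X by simp
next
  fix \<alpha> :: "nat set" assume "\<alpha> \<subseteq> {0..<n}" "card \<alpha> = k"
  then show "(\<Prod>j\<in>\<alpha>. (vec_norm2 (row A j))\<^sup>2) \<le> M\<^sup>2"
    unfolding prod_power_distrib[symmetric]
    by (intro power_mono M) (auto intro: prod_nonneg vec_norm2_nonneg)
qed simp

lemma invariant_block_det_sq_le:
  assumes A: "A \<in> carrier_mat n n" and X: "X \<in> carrier_mat n k" and T: "T \<in> carrier_mat k k"
    and k: "0 < k" and AX: "A * X = X * T"
    and inj: "\<And>v. v \<in> carrier_vec k \<Longrightarrow> X *\<^sub>v v = 0\<^sub>v n \<Longrightarrow> v = 0\<^sub>v k"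
    and M: "\<And>\<alpha>. \<alpha> \<subseteq> {0..<n} \<Longrightarrow> card \<alpha> = k \<Longrightarrow> (\<Prod>i\<in>\<alpha>. vec_norm2 (row A i)) \<le> M"
  shows "(cmod (det T))\<^sup>2 \<le> (real n / real k) ^ k * M\<^sup>2"
proof -
  define u where "u = (\<lambda>j. inverse ((vec_norm2 (row A j))\<^sup>2))"
  have AX_carrier: "A * X \<in> carrier_mat n k" using A X by simp
  obtain g where "0 < g" and g: "det (adjoint_mat X * X) = of_real g"
    using det_gram_pos[OF X inj] .
  have "of_real ((cmod (det T))\<^sup>2 * g) = det (adjoint_mat (A * X) * (A * X))"
    unfolding AX det_gram_mult_right[OF X T] g by simp
  then have gram: "(cmod (det T))\<^sup>2 * g = weighted_minor_sum (A * X) n k (\<lambda>_. 1) / fact k"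
    unfolding det_weighted_gram[OF AX_carrier] of_real_eq_iff .
  have "weighted_minor_sum (A * X) n k u / fact k = Re (det (weighted_adjoint (A * X) u * (A * X)))"
    unfolding det_weighted_gram[OF AX_carrier] Re_complex_of_real ..
  also have "\<dots> \<le> g * (real n / real k) ^ k"
  proof -
    have "u j * (vec_norm2 (row A j))\<^sup>2 \<le> 1" for j
      by (cases "vec_norm2 (row A j) = 0") (simp_all add: u_def)
    then show ?thesis
      using det_weighted_gram_le[OF A X k inj, of u] g by (simp add: u_def)
  qed
  finally have weighted: "weighted_minor_sum (A * X) n k u / fact k \<le> g * (real n / real k) ^ k" .
  have "weighted_minor_sum (A * X) n k (\<lambda>_. 1) / fact k \<le> M\<^sup>2 * (weighted_minor_sum (A * X) n k u / fact k)"
    using minor_sum_le_row_norms[OF A X M] by (simp add: u_def divide_right_mono)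
  also have "\<dots> \<le> M\<^sup>2 * (g * (real n / real k) ^ k)"
    using weighted by (rule mult_left_mono) simp
  finally have "g * (cmod (det T))\<^sup>2 \<le> g * ((real n / real k) ^ k * M\<^sup>2)"
    unfolding gram[symmetric] by (simp add: ac_simps)
  then show ?thesis using \<open>0 < g\<close> by simp
qed

lemma cmod_prod_eigenvalues_le_row_norms:
  assumes A: "A \<in> carrier_mat n n" and cp: "char_poly A = (\<Prod>e\<leftarrow>es. [:- e, 1:])"
    and "0 < k" and "k \<le> n"
    and M: "\<And>\<alpha>. \<alpha> \<subseteq> {0..<n} \<Longrightarrow> card \<alpha> = k \<Longrightarrow> (\<Prod>i\<in>\<alpha>. vec_norm2 (row A i)) \<le> M"
  shows "cmod (\<Prod>i<k. es ! i) \<le> (real n / real k) powr (real k / 2) * M"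
proof -
  obtain X T where "X \<in> carrier_mat n k" "T \<in> carrier_mat k k" "A * X = X * T"
    and det_T: "det T = (\<Prod>i<k. es ! i)"
    and "\<And>v. v \<in> carrier_vec k \<Longrightarrow> X *\<^sub>v v = 0\<^sub>v n \<Longrightarrow> v = 0\<^sub>v k"
    using schur_invariant_subspace[OF A cp \<open>k \<le> n\<close>] by blast
  then have "(cmod (\<Prod>i<k. es ! i))\<^sup>2 \<le> (real n / real k) ^ k * M\<^sup>2"
    unfolding det_T[symmetric] using invariant_block_det_sq_le[OF A _ _ \<open>0 < k\<close> _ _ M] by blast
  also have "(real n / real k) ^ k = ((real n / real k) powr (real k / 2))\<^sup>2"
    using \<open>0 < k\<close> \<open>k \<le> n\<close> by (simp add: power2_eq_square powr_realpow flip: powr_add)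
  also have "\<dots> * M\<^sup>2 = ((real n / real k) powr (real k / 2) * M)\<^sup>2"
    by (simp add: power_mult_distrib)
  finally have sq: "(cmod (\<Prod>i<k. es ! i))\<^sup>2 \<le> ((real n / real k) powr (real k / 2) * M)\<^sup>2" .
  have "0 \<le> (\<Prod>i\<in>{0..<k}. vec_norm2 (row A i))"
    by (intro prod_nonneg) (simp add: vec_norm2_nonneg)
  also have "\<dots> \<le> M"
    using \<open>k \<le> n\<close> by (intro M) auto
  finally show ?thesis
    using power2_le_imp_le[OF sq] by simp
qed

theorem theorem3p5:
  fixes A :: "complex mat" and n k :: nat and es :: "complex list"
  assumes "0 < k" and "k \<le> n"
    and "A \<in> carrier_mat n n"
    and "is_eigenvalue_list A es"
    and "sorted_wrt (\<lambda>a b. cmod a \<ge> cmod b) es"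
  shows "cmod (\<Prod>i<k. es ! i) \<le>
     (real n / real k) powr (real k / 2) *
     min (Max ((\<lambda>\<alpha>. \<Prod>i\<in>\<alpha>. vec_norm2 (col A i)) ` {\<alpha>. \<alpha> \<subseteq> {0..<n} \<and> card \<alpha> = k}))
         (Max ((\<lambda>\<alpha>. \<Prod>i\<in>\<alpha>. vec_norm2 (row A i)) ` {\<alpha>. \<alpha> \<subseteq> {0..<n} \<and> card \<alpha> = k}))"
proof -
  let ?S = "{\<alpha>. \<alpha> \<subseteq> {0..<n} \<and> card \<alpha> = k}"
  have fin: "finite ?S" by (rule finite_subset[of _ "Pow {0..<n}"]) auto
  have cp: "char_poly A = (\<Prod>e\<leftarrow>es. [:- e, 1:])"
    using assms(4) by (simp add: is_eigenvalue_list_def)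
  have rows: "cmod (\<Prod>i<k. es ! i) \<le>
      (real n / real k) powr (real k / 2) * Max ((\<lambda>\<alpha>. \<Prod>i\<in>\<alpha>. vec_norm2 (row A i)) ` ?S)"
    by (rule cmod_prod_eigenvalues_le_row_norms[OF assms(3) cp assms(1,2)]) (auto intro: Max_ge fin)
  have cols: "cmod (\<Prod>i<k. es ! i) \<le>
      (real n / real k) powr (real k / 2) * Max ((\<lambda>\<alpha>. \<Prod>i\<in>\<alpha>. vec_norm2 (col A i)) ` ?S)"
  proof (rule cmod_prod_eigenvalues_le_row_norms[of "transpose_mat A"])
    fix \<alpha> assume "\<alpha> \<subseteq> {0..<n}" "card \<alpha> = k"
    moreover have "(\<Prod>i\<in>\<alpha>. vec_norm2 (row (transpose_mat A) i)) = (\<Prod>i\<in>\<alpha>. vec_norm2 (col A i))"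
      using \<open>\<alpha> \<subseteq> {0..<n}\<close> assms(3) by (intro prod.cong) auto
    ultimately show "(\<Prod>i\<in>\<alpha>. vec_norm2 (row (transpose_mat A) i)) \<le>
        Max ((\<lambda>\<alpha>. \<Prod>i\<in>\<alpha>. vec_norm2 (col A i)) ` ?S)"
      by (auto intro: Max_ge fin)
  qed (use assms cp in auto)
  show ?thesis using rows cols by (simp add: min_def)
qed

end
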